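(* Let $H$ be any random variable with values in $(0,1)$ with $\mu_{\log}:=E[-\log(1-H)]<\infty$ (no non-lattice assumption). Let $Q_\bullet$ be the Markov chain on $\{1,2,\dots\}$ with transition probabilities $p_{m,n}=\binom{n-1}{m-1}\mu_{n-m,m}$ for $1\le m\le n$ (and $0$ for $n<m$) and initial distribution $P(Q_0=n)=\mu_{n,0}/(n\,\mu_{\log})$, $n\ge1$. Then for every $n\ge1$, $$P(Q_k=n\text{ for some }k\ge0)=\frac{1-\mu_{0,n}}{n\,\mu_{\log}}.$$
   Context: $\mu_{i,j}:=E[H^i(1-H)^j]$. *)

theory Defs
  imports "HOL-Probability.Probability"
begin

definition mom :: "'a measure \<Rightarrow> ('a \<Rightarrow> real) \<Rightarrow> nat \<Rightarrow> nat \<Rightarrow> real" where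
  "mom M H i j = integral\<^sup>L M (\<lambda>x. H x ^ i * (1 - H x) ^ j)"

definition mu_log :: "'a measure \<Rightarrow> ('a \<Rightarrow> real) \<Rightarrow> real" where
  "mu_log M H = integral\<^sup>L M (\<lambda>x. - ln (1 - H x))"

definition trans_p :: "'a measure \<Rightarrow> ('a \<Rightarrow> real) \<Rightarrow> nat \<Rightarrow> nat \<Rightarrow> real" where
  "trans_p M H m n = (if 1 \<le> m \<and> m \<le> n then real ((n - 1) choose (m - 1)) * mom M H (n - m) m else 0)"

definition init_p :: "'a measure \<Rightarrow> ('a \<Rightarrow> real) \<Rightarrow> nat \<Rightarrow> real" where
  "init_p M H n = (if 1 \<le> n then mom M H n 0 / (real n * mu_log M H) else 0)"

end

theory Submission
  imports Defs
begin

text \<open>Transitions only go upwards, so almost surely the chain is nondecreasing and visits n in a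
  single block of consecutive times. Summing over the first time of that block gives the hitting
  probability, while the expected number of visits to n is the hitting probability divided by
  1 - p(n,n). Decomposing the first visit according to the previous state yields the recursion
  P(hit n) = P(Q 0 = n) + sum over m < n of P(hit m) p(m,n) / (1 - p(m,m)), and since
  p(m,m) = mu(0,m) the claimed value solves it by the binomial identity
  sum over m of binom(n,m) mu(n-m,m) = E[(H + (1 - H))^n] = 1.\<close>

lemma sums_first_order_recurrence:
  fixes g v :: "nat \<Rightarrow> 'a :: {real_normed_field, banach}"
  assumes g_abs: "summable (\<lambda>j. norm (g j))" and g_sums: "g sums a"
    and v_0: "v 0 = g 0" and v_Suc: "\<And>j. v (Suc j) = g (Suc j) + p * v j"
    and p: "norm p < 1"
  shows "v sums (a / (1 - p))"
proof -
  have v_conv: "v j = (\<Sum>i\<le>j. g i * p ^ (j - i))" for j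
  proof (induction j)
    case (Suc j)
    have "(\<Sum>i\<le>Suc j. g i * p ^ (Suc j - i)) = g (Suc j) + p * (\<Sum>i\<le>j. g i * p ^ (j - i))"
      by (simp add: sum_distrib_left Suc_diff_le algebra_simps)
    then show ?case using Suc by (simp add: v_Suc)
  qed (simp add: v_0)
  have "summable (\<lambda>k. norm (p ^ k))"
    using p by (simp add: norm_power summable_geometric)
  then have "(\<lambda>j. \<Sum>i\<le>j. g i * p ^ (j - i)) sums (suminf g * (\<Sum>k. p ^ k))"
    by (rule Cauchy_product_sums[OF g_abs])
  moreover have "suminf g * (\<Sum>k. p ^ k) = a / (1 - p)"
    using g_sums p by (simp add: sums_iff suminf_geometric divide_inverse)
  moreover have "v = (\<lambda>j. \<Sum>i\<le>j. g i * p ^ (j - i))"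
    using v_conv by (intro ext)
  ultimately show ?thesis by simp
qed

lemma binomial_pred_div:
  assumes "1 \<le> m" "m \<le> n"
  shows "real ((n - 1) choose (m - 1)) / real m = real (n choose m) / real n"
  using times_binomial_minus1_eq[of m n] assms
  by (simp add: field_simps flip: of_nat_mult)

context
  fixes M :: "'a measure" and H :: "'a \<Rightarrow> real"
  assumes M: "prob_space M" and H_measurable: "H \<in> borel_measurable M"
    and H_range: "\<forall>x\<in>space M. 0 < H x \<and> H x < 1"
begin

interpretation prob_space M by (rule M)

lemma integrable_mom_integrand: "integrable M (\<lambda>x. H x ^ i * (1 - H x) ^ j)"
proof (rule integrable_const_bound[where B = 1])
  show "AE x in M. norm (H x ^ i * (1 - H x) ^ j) \<le> 1"
    using H_range by (intro AE_I2) (auto simp: abs_mult mult_le_one power_le_one)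
qed (use H_measurable in measurable)

lemma sum_binomial_mom: "(\<Sum>m\<le>n. real (n choose m) * mom M H (n - m) m) = 1"
proof -
  have "(\<Sum>m\<le>n. real (n choose m) * mom M H (n - m) m)
      = integral\<^sup>L M (\<lambda>x. \<Sum>m\<le>n. real (n choose m) * (H x ^ (n - m) * (1 - H x) ^ m))"
    unfolding mom_def using integrable_mom_integrand by (simp add: Bochner_Integration.integral_sum)
  also have "\<dots> = integral\<^sup>L M (\<lambda>x. ((1 - H x) + H x) ^ n)"
    by (simp only: binomial_ring) (simp add: algebra_simps)
  finally show ?thesis by (simp add: prob_space)
qed

lemma mom_0_nonneg: "0 \<le> mom M H 0 m"
  unfolding mom_def using H_range by (intro integral_nonneg_AE AE_I2) auto

lemma mom_0_less_1:
  assumes "1 \<le> m"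
  shows "mom M H 0 m < 1"
proof -
  have "AE x in M. (1 - H x) ^ m < 1"
    using H_range assms by (intro AE_I2) (auto simp: power_less_one_iff)
  then have "integral\<^sup>L M (\<lambda>x. (1 - H x) ^ m) < integral\<^sup>L M (\<lambda>x. 1)"
    using integrable_mom_integrand[of 0 m] by (intro integral_less_AE_space) (auto simp: emeasure_space_1)
  then show ?thesis by (simp add: mom_def prob_space)
qed

lemma mom_binomial_recursion:
  assumes n: "1 \<le> n"
  shows "mom M H n 0 / real n + (\<Sum>m\<in>{1..<n}. real ((n - 1) choose (m - 1)) * mom M H (n - m) m / real m)
           = (1 - mom M H 0 n) / real n"
proof -
  have "{..n} = insert 0 (insert n {1..<n})" using n by auto
  then have "(\<Sum>m\<in>{1..<n}. real (n choose m) * mom M H (n - m) m) = 1 - mom M H n 0 - mom M H 0 n"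
    using sum_binomial_mom[of n] n by simp
  moreover have "(\<Sum>m\<in>{1..<n}. real ((n - 1) choose (m - 1)) * mom M H (n - m) m / real m)
      = (\<Sum>m\<in>{1..<n}. real (n choose m) * mom M H (n - m) m) / real n"
    unfolding sum_divide_distrib
    by (intro sum.cong refl) (use binomial_pred_div in \<open>fastforce simp: field_simps\<close>)
  ultimately show ?thesis by (simp add: diff_divide_distrib add_divide_distrib)
qed

lemma abs_trans_p_diag_less_1: "\<bar>trans_p M H m m\<bar> < 1"
  using mom_0_nonneg[of m] mom_0_less_1[of m] by (auto simp: trans_p_def)

lemma hitting_recursion_solution:
  assumes rec: "\<And>n. 1 \<le> n \<Longrightarrow>
      f n = init_p M H n + (\<Sum>m<n. f m / (1 - trans_p M H m m) * trans_p M H m n)"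
    and "1 \<le> n"
  shows "f n = (1 - mom M H 0 n) / (real n * mu_log M H)"
  using \<open>1 \<le> n\<close>
proof (induction n rule: less_induct)
  case (less n)
  define L where "L = mu_log M H"
  have summand: "f m / (1 - trans_p M H m m) * trans_p M H m n
      = real ((n - 1) choose (m - 1)) * mom M H (n - m) m / real m / L" if "m \<in> {1..<n}" for m
  proof -
    have "f m = (1 - mom M H 0 m) / (real m * L)" using less.IH that by (simp add: L_def)
    moreover have "mom M H 0 m < 1" using mom_0_less_1 that by simp
    ultimately have "f m / (1 - trans_p M H m m) = 1 / (real m * L)"
      using that by (simp add: trans_p_def)
    then show ?thesis using that by (simp add: trans_p_def)
  qed
  have "{..<n} = insert 0 {1..<n}" using less.prems by auto
  then have "f n = init_p M H n
      + (\<Sum>m\<in>{1..<n}. real ((n - 1) choose (m - 1)) * mom M H (n - m) m / real m / L)"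
    using rec[OF less.prems] summand by (simp add: trans_p_def)
  also have "\<dots> = (mom M H n 0 / real n
      + (\<Sum>m\<in>{1..<n}. real ((n - 1) choose (m - 1)) * mom M H (n - m) m / real m)) / L"
    using less.prems by (simp add: init_p_def L_def sum_divide_distrib add_divide_distrib)
  also have "\<dots> = (1 - mom M H 0 n) / (real n * L)"
    using mom_binomial_recursion[OF less.prems] by simp
  finally show ?case by (simp add: L_def)
qed

end

locale upward_chain = prob_space N
  for N :: "'b measure" and Q :: "nat \<Rightarrow> 'b \<Rightarrow> nat"
    and init :: "nat \<Rightarrow> real" and p :: "nat \<Rightarrow> nat \<Rightarrow> real" +
  assumes Q_measurable[measurable]: "Q k \<in> measurable N (count_space UNIV)"
    and measure_cylinder: "measure N {\<omega> \<in> space N. \<forall>i\<le>k. Q i \<omega> = ns i}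
                             = init (ns 0) * (\<Prod>i<k. p (ns i) (ns (Suc i)))"
    and p_downward: "n < m \<Longrightarrow> p m n = 0"
begin

definition prefix :: "nat \<Rightarrow> 'b \<Rightarrow> nat \<Rightarrow> nat" where
  "prefix k \<omega> = (\<lambda>i\<in>{..k}. Q i \<omega>)"

definition path_prob :: "nat \<Rightarrow> (nat \<Rightarrow> nat) \<Rightarrow> real" where
  "path_prob k ns = init (ns 0) * (\<Prod>i<k. p (ns i) (ns (Suc i)))"

lemma prefix_eq_iff:
  "ns \<in> extensional {..k} \<Longrightarrow> prefix k \<omega> = ns \<longleftrightarrow> (\<forall>i\<le>k. Q i \<omega> = ns i)"
  unfolding prefix_def by (auto simp: extensional_def fun_eq_iff)

lemma measure_prefix_eq:
  "ns \<in> extensional {..k} \<Longrightarrow> measure N {\<omega> \<in> space N. prefix k \<omega> = ns} = path_prob k ns"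
  using measure_cylinder by (simp add: prefix_eq_iff path_prob_def)

lemma sets_prefix_eq[measurable]: "{\<omega> \<in> space N. prefix k \<omega> = ns} \<in> sets N"
proof (cases "ns \<in> extensional {..k}")
  case True
  then have eq: "{\<omega> \<in> space N. prefix k \<omega> = ns} = {\<omega> \<in> space N. \<forall>i\<le>k. Q i \<omega> = ns i}"
    by (simp add: prefix_eq_iff)
  show ?thesis unfolding eq by measurable
next
  case False
  then have "{\<omega> \<in> space N. prefix k \<omega> = ns} = {}" by (auto simp: prefix_def)
  then show ?thesis by (simp only: sets.empty_sets)
qed

lemma sets_prefix_event: "{\<omega> \<in> space N. P (prefix k \<omega>)} \<in> sets N"
proof -
  have "{\<omega> \<in> space N. P (prefix k \<omega>)}
      = (\<Union>ns\<in>{ns \<in> PiE {..k} (\<lambda>_. UNIV). P ns}. {\<omega> \<in> space N. prefix k \<omega> = ns})"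
    by (auto simp: prefix_def restrict_PiE_iff)
  moreover have "countable {ns \<in> PiE {..k} (\<lambda>_. UNIV :: nat set). P ns}"
    by (rule countable_subset[OF _ countable_PiE[of "{..k}" "\<lambda>_. UNIV"]]) auto
  ultimately show ?thesis by (auto intro: sets.countable_UN')
qed

text \<open>A downward step would pass through a cylinder of probability zero, and there are only
  countably many cylinders.\<close>
lemma AE_incseq: "AE \<omega> in N. incseq (\<lambda>k. Q k \<omega>)"
proof -
  have "AE \<omega> in N. \<forall>ns\<in>{ns \<in> PiE {..Suc k} (\<lambda>_. UNIV :: nat set). ns (Suc k) < ns k}. prefix (Suc k) \<omega> \<noteq> ns"
    for k
  proof (rule AE_ball_countable')
    fix ns assume ns: "ns \<in> {ns \<in> PiE {..Suc k} (\<lambda>_. UNIV :: nat set). ns (Suc k) < ns k}"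
    then have "path_prob (Suc k) ns = 0" by (simp add: path_prob_def p_downward)
    then have "{\<omega> \<in> space N. prefix (Suc k) \<omega> = ns} \<in> null_sets N"
      using ns measure_prefix_eq[of ns "Suc k"]
      by (intro null_setsI) (auto simp: emeasure_eq_measure PiE_iff)
    then show "AE \<omega> in N. prefix (Suc k) \<omega> \<noteq> ns"
      by (rule AE_I') auto
  qed (rule countable_subset[OF _ countable_PiE[of "{..Suc k}" "\<lambda>_. UNIV"]], auto)
  then have "AE \<omega> in N. \<forall>k. \<forall>ns\<in>{ns \<in> PiE {..Suc k} (\<lambda>_. UNIV :: nat set). ns (Suc k) < ns k}. prefix (Suc k) \<omega> \<noteq> ns"
    by (simp add: AE_all_countable)
  then show ?thesis
  proof eventually_elim
    case (elim \<omega>)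
    show ?case
    proof (rule incseq_SucI, rule ccontr)
      fix k assume "\<not> Q k \<omega> \<le> Q (Suc k) \<omega>"
      then show False using elim[rule_format, of "prefix (Suc k) \<omega>" k] by (auto simp: prefix_def)
    qed
  qed
qed

text \<open>By monotonicity the event is almost surely the finite union of the cylinders of its
  prefixes with values at most \<open>c\<close>.\<close>
lemma measure_prefix_event:
  "measure N {\<omega> \<in> space N. Q k \<omega> \<le> c \<and> P (prefix k \<omega>)}
     = (\<Sum>ns \<in> {ns \<in> PiE {..k} (\<lambda>_. {..c}). P ns}. path_prob k ns)"
proof -
  let ?S = "{ns \<in> PiE {..k} (\<lambda>_. {..c}). P ns}"
  have fin: "finite ?S"
    by (rule finite_subset[OF _ finite_PiE[of "{..k}" "\<lambda>_. {..c}"]]) auto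
  have event: "{\<omega> \<in> space N. Q k \<omega> \<le> c \<and> P (prefix k \<omega>)}
      = {\<omega> \<in> space N. (\<lambda>ns. ns k \<le> c \<and> P ns) (prefix k \<omega>)}"
    by (simp add: prefix_def)
  have "measure N {\<omega> \<in> space N. Q k \<omega> \<le> c \<and> P (prefix k \<omega>)}
      = measure N (\<Union>ns\<in>?S. {\<omega> \<in> space N. prefix k \<omega> = ns})"
  proof (rule finite_measure_eq_AE)
    show "AE \<omega> in N. (\<omega> \<in> {\<omega> \<in> space N. Q k \<omega> \<le> c \<and> P (prefix k \<omega>)})
        = (\<omega> \<in> (\<Union>ns\<in>?S. {\<omega> \<in> space N. prefix k \<omega> = ns}))"
      using AE_incseq
    proof eventually_elim
      case (elim \<omega>)
      then have "Q i \<omega> \<le> Q k \<omega>" if "i \<le> k" for i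
        using that by (simp add: incseq_def)
      then show ?case by (force simp: prefix_def restrict_PiE_iff intro: order_trans)
    qed
    show "{\<omega> \<in> space N. Q k \<omega> \<le> c \<and> P (prefix k \<omega>)} \<in> sets N"
      unfolding event by (rule sets_prefix_event)
  qed (use fin in auto)
  also have "\<dots> = (\<Sum>ns\<in>?S. measure N {\<omega> \<in> space N. prefix k \<omega> = ns})"
    by (rule finite_measure_finite_Union) (auto simp: fin disjoint_family_on_def)
  also have "\<dots> = (\<Sum>ns\<in>?S. path_prob k ns)"
    by (intro sum.cong refl measure_prefix_eq) (auto simp: PiE_iff)
  finally show ?thesis .
qed

lemma measure_Q_0: "measure N {\<omega> \<in> space N. Q 0 \<omega> = n} = init n"
  using measure_cylinder[of 0 "\<lambda>_. n"] by simp

lemma measure_transition: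
  "measure N {\<omega> \<in> space N. Q j \<omega> = m \<and> Q (Suc j) \<omega> = n}
     = measure N {\<omega> \<in> space N. Q j \<omega> = m} * p m n"
proof -
  define c where "c = max m n"
  define S where "S = {ns \<in> PiE {..j} (\<lambda>_. {..c}). ns j = m}"
  define extend where "extend ns = ns(Suc j := n)" for ns :: "nat \<Rightarrow> nat"
  have "{\<omega> \<in> space N. Q j \<omega> = m}
      = {\<omega> \<in> space N. Q j \<omega> \<le> c \<and> (\<lambda>ns. ns j = m) (prefix j \<omega>)}"
    by (auto simp: prefix_def c_def)
  then have occupation: "measure N {\<omega> \<in> space N. Q j \<omega> = m} = (\<Sum>ns\<in>S. path_prob j ns)"
    using measure_prefix_event[where P = "\<lambda>ns. ns j = m"] by (simp add: S_def)
  have extend_image: "{ns \<in> PiE {..Suc j} (\<lambda>_. {..c}). ns j = m \<and> ns (Suc j) = n} = extend ` S"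
  proof (intro equalityI subsetI)
    fix ns assume ns: "ns \<in> {ns \<in> PiE {..Suc j} (\<lambda>_. {..c}). ns j = m \<and> ns (Suc j) = n}"
    then have "ns = extend (restrict ns {..j})"
      by (auto simp: extend_def fun_eq_iff PiE_iff extensional_def le_Suc_eq)
    moreover have "restrict ns {..j} \<in> S" using ns by (auto simp: S_def)
    ultimately show "ns \<in> extend ` S" by blast
  qed (auto simp: S_def extend_def c_def PiE_iff extensional_def)
  have extend_inj: "inj_on extend S"
  proof (rule inj_onI)
    fix ns ns' assume S: "ns \<in> S" "ns' \<in> S" and eq: "extend ns = extend ns'"
    have "ns i = ns' i" if "i \<le> j" for i
      using fun_cong[OF eq, of i] that by (simp add: extend_def)
    then show "ns = ns'"
      using S by (intro extensionalityI[of _ "{..j}"]) (auto simp: S_def PiE_iff)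
  qed
  have path_prob_extend: "path_prob (Suc j) (extend ns) = path_prob j ns * p m n" if "ns \<in> S" for ns
    using that by (simp add: path_prob_def extend_def S_def)
  have "{\<omega> \<in> space N. Q j \<omega> = m \<and> Q (Suc j) \<omega> = n}
      = {\<omega> \<in> space N. Q (Suc j) \<omega> \<le> c \<and> (\<lambda>ns. ns j = m \<and> ns (Suc j) = n) (prefix (Suc j) \<omega>)}"
    by (auto simp: prefix_def c_def)
  then have "measure N {\<omega> \<in> space N. Q j \<omega> = m \<and> Q (Suc j) \<omega> = n}
      = (\<Sum>ns\<in>extend ` S. path_prob (Suc j) ns)"
    using measure_prefix_event[where P = "\<lambda>ns. ns j = m \<and> ns (Suc j) = n"] by (simp add: extend_image)
  also have "\<dots> = (\<Sum>ns\<in>S. path_prob j ns * p m n)"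
    by (simp add: sum.reindex extend_inj path_prob_extend)
  also have "\<dots> = measure N {\<omega> \<in> space N. Q j \<omega> = m} * p m n"
    by (simp add: occupation sum_distrib_right)
  finally show ?thesis .
qed

lemma measure_jump_from_below:
  "measure N {\<omega> \<in> space N. Q (Suc j) \<omega> = n \<and> Q j \<omega> < c}
     = (\<Sum>m<c. measure N {\<omega> \<in> space N. Q j \<omega> = m} * p m n)"
proof -
  have event: "{\<omega> \<in> space N. Q (Suc j) \<omega> = n \<and> Q j \<omega> < c}
      = (\<Union>m<c. {\<omega> \<in> space N. Q j \<omega> = m \<and> Q (Suc j) \<omega> = n})"
    by auto
  have "measure N (\<Union>m<c. {\<omega> \<in> space N. Q j \<omega> = m \<and> Q (Suc j) \<omega> = n})
      = (\<Sum>m<c. measure N {\<omega> \<in> space N. Q j \<omega> = m \<and> Q (Suc j) \<omega> = n})"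
    by (rule finite_measure_finite_Union) (auto simp: disjoint_family_on_def)
  then show ?thesis by (simp add: event measure_transition)
qed

lemma measure_Q_Suc:
  "measure N {\<omega> \<in> space N. Q (Suc j) \<omega> = n}
     = (\<Sum>m<n. measure N {\<omega> \<in> space N. Q j \<omega> = m} * p m n)
       + p n n * measure N {\<omega> \<in> space N. Q j \<omega> = n}"
proof -
  have "measure N {\<omega> \<in> space N. Q (Suc j) \<omega> = n}
      = measure N {\<omega> \<in> space N. Q (Suc j) \<omega> = n \<and> Q j \<omega> < Suc n}"
  proof (rule finite_measure_eq_AE)
    show "AE \<omega> in N. (\<omega> \<in> {\<omega> \<in> space N. Q (Suc j) \<omega> = n})
        = (\<omega> \<in> {\<omega> \<in> space N. Q (Suc j) \<omega> = n \<and> Q j \<omega> < Suc n})"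
      using AE_incseq by eventually_elim (auto simp: incseq_Suc_iff less_Suc_eq_le)
  qed simp_all
  then show ?thesis by (simp add: measure_jump_from_below)
qed

definition first_hit :: "nat \<Rightarrow> nat \<Rightarrow> 'b set" where
  "first_hit j n = {\<omega> \<in> space N. Q j \<omega> = n \<and> (\<forall>i<j. Q i \<omega> \<noteq> n)}"

definition hitting_prob :: "nat \<Rightarrow> real" where
  "hitting_prob n = measure N {\<omega> \<in> space N. \<exists>k. Q k \<omega> = n}"

lemma sets_first_hit[measurable]: "first_hit j n \<in> sets N"
  unfolding first_hit_def by measurable

lemma measure_first_hit_0: "measure N (first_hit 0 n) = init n"
  by (simp add: first_hit_def measure_Q_0)

lemma measure_first_hit_Suc:
  "measure N (first_hit (Suc j) n) = (\<Sum>m<n. measure N {\<omega> \<in> space N. Q j \<omega> = m} * p m n)"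
proof -
  have "measure N (first_hit (Suc j) n) = measure N {\<omega> \<in> space N. Q (Suc j) \<omega> = n \<and> Q j \<omega> < n}"
  proof (rule finite_measure_eq_AE)
    show "AE \<omega> in N. (\<omega> \<in> first_hit (Suc j) n)
        = (\<omega> \<in> {\<omega> \<in> space N. Q (Suc j) \<omega> = n \<and> Q j \<omega> < n})"
      using AE_incseq
    proof eventually_elim
      case (elim \<omega>)
      then have "Q i \<omega> \<le> Q j \<omega>" "Q j \<omega> \<le> Q (Suc j) \<omega>" if "i \<le> j" for i
        using that by (auto simp: incseq_def)
      then show ?case by (force simp: first_hit_def less_Suc_eq_le)
    qed
  qed simp_all
  then show ?thesis by (simp add: measure_jump_from_below)
qed

lemma first_hit_sums: "(\<lambda>j. measure N (first_hit j n)) sums hitting_prob n"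
proof -
  have "disjoint_family (\<lambda>j. first_hit j n)"
    unfolding disjoint_family_on_def first_hit_def by (auto elim!: linorder_neqE_nat)
  then have "(\<lambda>j. measure N (first_hit j n)) sums measure N (\<Union>j. first_hit j n)"
    by (intro finite_measure_UNION) auto
  moreover have "(\<Union>j. first_hit j n) = {\<omega> \<in> space N. \<exists>k. Q k \<omega> = n}"
    unfolding first_hit_def by (auto intro: LeastI dest: not_less_Least)
  ultimately show ?thesis by (simp add: hitting_prob_def)
qed

lemma occupation_sums:
  assumes "\<bar>p n n\<bar> < 1"
  shows "(\<lambda>j. measure N {\<omega> \<in> space N. Q j \<omega> = n}) sums (hitting_prob n / (1 - p n n))"
proof (rule sums_first_order_recurrence[OF _ first_hit_sums])
  show "summable (\<lambda>j. norm (measure N (first_hit j n)))"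
    using first_hit_sums by (simp add: sums_iff)
qed (use assms in \<open>simp_all add: measure_Q_0 measure_first_hit_0 measure_first_hit_Suc measure_Q_Suc\<close>)

lemma hitting_prob_recursion:
  assumes "\<And>m. m < n \<Longrightarrow> \<bar>p m m\<bar> < 1"
  shows "hitting_prob n = init n + (\<Sum>m<n. hitting_prob m / (1 - p m m) * p m n)"
proof -
  have "(\<lambda>j. measure N (first_hit (Suc j) n)) sums (hitting_prob n - init n)"
    using first_hit_sums[of n] by (subst sums_Suc_iff) (simp add: measure_first_hit_0)
  moreover have "(\<lambda>j. measure N (first_hit (Suc j) n)) sums (\<Sum>m<n. hitting_prob m / (1 - p m m) * p m n)"
    unfolding measure_first_hit_Suc using assms by (intro sums_sum sums_mult2 occupation_sums) auto
  ultimately have "hitting_prob n - init n = (\<Sum>m<n. hitting_prob m / (1 - p m m) * p m n)"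
    by (rule sums_unique2)
  then show ?thesis by simp
qed

end

theorem mainTheorem12:
  fixes M :: "'a measure" and H :: "'a \<Rightarrow> real"
    and N :: "'b measure" and Q :: "nat \<Rightarrow> 'b \<Rightarrow> nat"
  assumes "prob_space M"
    and "H \<in> borel_measurable M"
    and "\<forall>x\<in>space M. 0 < H x \<and> H x < 1"
    and "integrable M (\<lambda>x. - ln (1 - H x))"
    and "prob_space N"
    and "\<forall>k. Q k \<in> measurable N (count_space UNIV)"
    and "\<forall>k. \<forall>\<omega>\<in>space N. 1 \<le> Q k \<omega>"
    and "\<forall>k (ns :: nat \<Rightarrow> nat).
           measure N {\<omega> \<in> space N. \<forall>i\<le>k. Q i \<omega> = ns i}
             = init_p M H (ns 0) * (\<Prod>i<k. trans_p M H (ns i) (ns (Suc i)))"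
    and "1 \<le> n"
  shows "measure N {\<omega> \<in> space N. \<exists>k. Q k \<omega> = n}
           = (1 - mom M H 0 n) / (real n * mu_log M H)"
proof -
  interpret upward_chain N Q "init_p M H" "trans_p M H"
  proof (rule upward_chain.intro[OF assms(5)], unfold_locales)
    show "Q k \<in> measurable N (count_space UNIV)" for k using assms(6) by blast
    show "measure N {\<omega> \<in> space N. \<forall>i\<le>k. Q i \<omega> = ns i}
        = init_p M H (ns 0) * (\<Prod>i<k. trans_p M H (ns i) (ns (Suc i)))" for k ns
      using assms(8) by blast
    show "trans_p M H m n = 0" if "n < m" for m n using that by (simp add: trans_p_def)
  qed
  have "hitting_prob n = (1 - mom M H 0 n) / (real n * mu_log M H)"
    using assms(1-3,9)
    by (intro hitting_recursion_solution hitting_prob_recursion abs_trans_p_diag_less_1)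
  then show ?thesis by (simp add: hitting_prob_def)
qed

end
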